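(* Let $\mathcal{Z}\subset\mathbb{R}^n$ be closed, Clarke regular and $\alpha$-prox-regular for some $\alpha>0$, $G:\mathcal{Z}\to\mathbb{S}^n_+$ a continuous metric, and $f:\mathcal{Z}\to\mathbb{R}^n$ a continuous vector field. For $K>0$ consider the anti-windup approximation $$\dot z\in F_K(z):=f(P_\mathcal{Z}(z))-\tfrac1KG^{-1}(P_\mathcal{Z}(z))\big(z-P_\mathcal{Z}(z)\big)$$ and the projected dynamical system $\dot z=\Pi^G_\mathcal{Z}[f](z)$, $z\in\mathcal{Z}$. If $\bar z^\star\in\mathcal{Z}$ is a weak equilibrium of the projected dynamical system, then there exists $K^\star>0$ such that for all $K\in(0,K^\star)$ there exists a weak equilibrium point $z_K^\star\in\bar z^\star+N_{\bar z^\star}\mathcal{Z}\cap\tfrac{1}{2\alpha}\operatorname{int}\mathbb{B}$ of the anti-windup approximation. Conversely, if $z_K^\star\in\mathcal{Z}+\tfrac{1}{2\alpha}\operatorname{int}\mathbb{B}$ is a weak equilibrium of the anti-windup approximation for some $K>0$, then $P_\mathcal{Z}(z_K^\star)$ is a weak equilibrium of the projected dynamical system.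
   Context: $\operatorname{int}\mathbb{B}$ is the open unit ball; $\mathbb{S}^n_+$ the symmetric positive definite matrices; $\|u\|_{G(x)}:=(u^TG(x)u)^{1/2}$. $P_\mathcal{Z}(z)$ is the (possibly set-valued) Euclidean projection onto $\mathcal{Z}$; expressions with it range over its elements. $T_x\mathcal{Z}$ is the tangent cone; Clarke regular means $x\mapsto T_x\mathcal{Z}$ is inner semicontinuous; $N_x\mathcal{Z}$ is the polar of $T_x\mathcal{Z}$; $\alpha$-prox-regular means for all $x\in\mathcal{Z}$, $\eta\in N_x\mathcal{Z}$: $\langle\eta,y-x\rangle\le\alpha\|\eta\|\|y-x\|^2$ for all $y\in\mathcal{Z}$. $\Pi^G_\mathcal{Z}[f](x):=\arg\min_{v\in T_x\mathcal{Z}}\|v-f(x)\|_{G(x)}$. A point $z^\star$ is a weak equilibrium of a system if the constant trajectory $z\equiv z^\star$ is a (Carathéodory) solution of it; for the anti-windup approximation this is equivalent to $0\in F_K(z^\star)$. *)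

theory Defs
  imports "HOL-Analysis.Analysis"
begin

(* Bouligand tangent cone T_x Z (empty if x \<notin> Z) *)
definition tangent_cone :: "(real^'n) set \<Rightarrow> real^'n \<Rightarrow> (real^'n) set" where
  "tangent_cone Z x = {v. x \<in> Z \<and> (\<exists>xs t. (\<forall>k. xs k \<in> Z \<and> t k > 0) \<and>
      xs \<longlonglongrightarrow> x \<and> t \<longlonglongrightarrow> 0 \<and> (\<lambda>k. (1 / t k) *\<^sub>R (xs k - x)) \<longlonglongrightarrow> v)}"

definition normal_cone :: "(real^'n) set \<Rightarrow> real^'n \<Rightarrow> (real^'n) set" where
  "normal_cone Z x = {\<eta>. \<forall>v \<in> tangent_cone Z x. \<eta> \<bullet> v \<le> 0}"

(* Clarke regular: x \<mapsto> T_x Z is inner semicontinuous on Z,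
   i.e. T_x Z \<subseteq> liminf_{y \<rightarrow>_Z x} T_y Z *)
definition clarke_regular :: "(real^'n) set \<Rightarrow> bool" where
  "clarke_regular Z \<longleftrightarrow> (\<forall>x \<in> Z. \<forall>v \<in> tangent_cone Z x. \<forall>e > 0. \<exists>d > 0.
      \<forall>y \<in> Z. dist y x < d \<longrightarrow> (\<exists>w \<in> tangent_cone Z y. dist w v < e))"

definition prox_regular :: "real \<Rightarrow> (real^'n) set \<Rightarrow> bool" where
  "prox_regular \<alpha> Z \<longleftrightarrow> (\<forall>x \<in> Z. \<forall>\<eta> \<in> normal_cone Z x. \<forall>y \<in> Z.
      \<eta> \<bullet> (y - x) \<le> \<alpha> * norm \<eta> * (norm (y - x))\<^sup>2)"

definition proj :: "(real^'n) set \<Rightarrow> real^'n \<Rightarrow> (real^'n) set" where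
  "proj Z z = {p \<in> Z. \<forall>q \<in> Z. dist z p \<le> dist z q}"

definition sym_posdef :: "real^'n^'n \<Rightarrow> bool" where
  "sym_posdef M \<longleftrightarrow> transpose M = M \<and> (\<forall>u. u \<noteq> 0 \<longrightarrow> u \<bullet> (M *v u) > 0)"

definition Gnorm :: "real^'n^'n \<Rightarrow> real^'n \<Rightarrow> real" where
  "Gnorm M u = sqrt (u \<bullet> (M *v u))"

(* projected vector field \<Pi>^G_Z[f](x) = argmin_{v \<in> T_x Z} \<parallel>v - f x\<parallel>_{G x};
   the projected dynamical system is only defined on Z (state constraint) *)
definition proj_field ::
  "(real^'n) set \<Rightarrow> (real^'n \<Rightarrow> real^'n^'n) \<Rightarrow> (real^'n \<Rightarrow> real^'n) \<Rightarrow> real^'n \<Rightarrow> (real^'n) set" where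
  "proj_field Z G f x = (if x \<in> Z then
      {v \<in> tangent_cone Z x. \<forall>w \<in> tangent_cone Z x. Gnorm (G x) (v - f x) \<le> Gnorm (G x) (w - f x)}
    else {})"

definition antiwindup ::
  "(real^'n) set \<Rightarrow> (real^'n \<Rightarrow> real^'n^'n) \<Rightarrow> (real^'n \<Rightarrow> real^'n) \<Rightarrow> real \<Rightarrow> real^'n \<Rightarrow> (real^'n) set" where
  "antiwindup Z G f K z = {f p - (1 / K) *\<^sub>R (matrix_inv (G p) *v (z - p)) | p. p \<in> proj Z z}"

definition abs_cont_on :: "real set \<Rightarrow> (real \<Rightarrow> 'a::real_normed_vector) \<Rightarrow> bool" where
  "abs_cont_on I x \<longleftrightarrow> (\<forall>e > 0. \<exists>d > 0. \<forall>D. finite D \<longrightarrow>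
      (\<forall>(a, b) \<in> D. a < b \<and> {a..b} \<subseteq> I) \<longrightarrow>
      pairwise (\<lambda>(a, b) (c, d). {a<..<b} \<inter> {c<..<d} = {}) D \<longrightarrow>
      (\<Sum>(a, b) \<in> D. b - a) < d \<longrightarrow> (\<Sum>(a, b) \<in> D. norm (x b - x a)) < e)"

definition caratheodory_solution :: "('a::euclidean_space \<Rightarrow> 'a set) \<Rightarrow> (real \<Rightarrow> 'a) \<Rightarrow> bool" where
  "caratheodory_solution F z \<longleftrightarrow> (\<forall>T \<ge> 0. abs_cont_on {0..T} z) \<and>
     (AE t in lebesgue. t \<ge> 0 \<longrightarrow> (\<exists>v. (z has_vector_derivative v) (at t) \<and> v \<in> F (z t)))"

definition weak_equilibrium :: "('a::euclidean_space \<Rightarrow> 'a set) \<Rightarrow> 'a \<Rightarrow> bool" where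
  "weak_equilibrium F z \<longleftrightarrow> caratheodory_solution F (\<lambda>t. z)"

end

theory Submission
  imports Defs
begin

text \<open>
  Only equilibria are concerned, so everything reduces to pointwise statements: a constant curve
  solves an inclusion iff \<open>0\<close> belongs to the right-hand side.  Writing \<open>M\<close> for \<open>G\<close> at the point in question, \<open>0\<close>
  is the \<open>M\<close>-closest point of the cone \<open>T\<^sub>x Z\<close> to \<open>f x\<close> iff \<open>M f x \<in> N\<^sub>x Z\<close>; and \<open>0 \<in> F\<^sub>K z\<close>
  iff \<open>z - p = K M f p\<close> for a projection \<open>p\<close> of \<open>z\<close>.  Given an equilibrium \<open>x\<close> of the projected
  system, \<open>z = x + K M f x\<close> is such a point once \<open>K\<close> is small, because \<open>\<alpha>\<close>-prox-regularity makes
  \<open>x\<close> a projection of \<open>x + \<eta>\<close> for every normal \<open>\<eta>\<close> of length at most \<open>1/(2\<alpha>)\<close>.  Conversely,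
  within distance \<open>1/(2\<alpha>)\<close> of \<open>Z\<close> projections are unique, and \<open>z - p\<close> is always normal at \<open>p\<close>.
\<close>

lemma weak_equilibrium_iff:
  fixes F :: "'a::euclidean_space \<Rightarrow> 'a set"
  shows "weak_equilibrium F z \<longleftrightarrow> 0 \<in> F z"
proof
  assume "0 \<in> F z"
  then show "weak_equilibrium F z"
    unfolding weak_equilibrium_def caratheodory_solution_def abs_cont_on_def
    by (auto intro!: always_eventually has_vector_derivative_const)
next
  assume "weak_equilibrium F z"
  then have AE_derivative:
    "AE t in lebesgue. t \<ge> 0 \<longrightarrow> (\<exists>v. ((\<lambda>t. z) has_vector_derivative v) (at t) \<and> v \<in> F z)"
    unfolding weak_equilibrium_def caratheodory_solution_def by blast
  show "0 \<in> F z"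
  proof (rule ccontr)
    assume not_0: "0 \<notin> F z"
    have "AE t in lebesgue. t \<notin> {0..1::real}"
      using AE_derivative
    proof eventually_elim
      case (elim t)
      have "\<not> (\<exists>v. ((\<lambda>t. z) has_vector_derivative v) (at t) \<and> v \<in> F z)"
        using not_0 vector_derivative_unique_at[OF _ has_vector_derivative_const] by blast
      with elim show ?case by auto
    qed
    then have "emeasure lebesgue {0..1::real} = 0"
      by (subst (asm) AE_iff_measurable[where N = "{0..1}"]) auto
    then show False by simp
  qed
qed

lemma sym_posdef_quadratic_nonneg:
  assumes "sym_posdef M"
  shows "0 \<le> u \<bullet> (M *v u)"
  using assms unfolding sym_posdef_def by (cases "u = 0") (auto intro: less_imp_le)

lemma sym_posdef_invertible:
  fixes M :: "real^'n^'n"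
  assumes "sym_posdef M"
  shows "invertible M"
proof -
  have "M *v x = 0 \<Longrightarrow> x = 0" for x
    using assms unfolding sym_posdef_def by force
  then show ?thesis
    using invertible_left_inverse matrix_left_invertible_ker by blast
qed

lemma matrix_inv_mult:
  fixes A :: "'a::semiring_1^'n^'m"
  assumes "invertible A"
  shows "A ** matrix_inv A = mat 1" and "matrix_inv A ** A = mat 1"
proof -
  have "\<exists>A'. A ** A' = mat 1 \<and> A' ** A = mat 1"
    using assms unfolding invertible_def .
  then have "A ** matrix_inv A = mat 1 \<and> matrix_inv A ** A = mat 1"
    unfolding matrix_inv_def by (rule someI_ex)
  then show "A ** matrix_inv A = mat 1" and "matrix_inv A ** A = mat 1" by simp_all
qed

lemma matrix_inv_mult_vector_eq_iff:
  fixes A :: "real^'n^'n"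
  assumes "invertible A"
  shows "matrix_inv A *v x = y \<longleftrightarrow> x = A *v y"
  using matrix_inv_mult[OF assms] by (auto simp: matrix_vector_mul_assoc)

lemma symmetric_quadratic_diff:
  fixes M :: "real^'n^'n"
  assumes "transpose M = M"
  shows "(x - y) \<bullet> (M *v (x - y)) = x \<bullet> (M *v x) - 2 * (x \<bullet> (M *v y)) + y \<bullet> (M *v y)"
proof -
  have "y \<bullet> (M *v x) = (y v* M) \<bullet> x"
    by (simp add: dot_lmul_matrix)
  also have "\<dots> = x \<bullet> (M *v y)"
    using vector_transpose_matrix[of y M] assms by (simp add: inner_commute)
  finally have "y \<bullet> (M *v x) = x \<bullet> (M *v y)" .
  then show ?thesis
    by (simp add: matrix_vector_mult_diff_distrib inner_diff_left inner_diff_right)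
qed

lemma cone_Gnorm_minimal_at_0_iff:
  fixes M :: "real^'n^'n"
  assumes M: "sym_posdef M" and T: "cone T"
  shows "(\<forall>w \<in> T. Gnorm M (- u) \<le> Gnorm M (w - u)) \<longleftrightarrow> (\<forall>w \<in> T. w \<bullet> (M *v u) \<le> 0)"
proof -
  have sym: "transpose M = M" using M unfolding sym_posdef_def by simp
  have Gnorm_le_iff: "Gnorm M (- u) \<le> Gnorm M (w - u) \<longleftrightarrow> 2 * (w \<bullet> (M *v u)) \<le> w \<bullet> (M *v w)"
    for w
    using sym_posdef_quadratic_nonneg[OF M] symmetric_quadratic_diff[OF sym, of w u]
      symmetric_quadratic_diff[OF sym, of 0 u]
    unfolding Gnorm_def by (simp add: real_sqrt_le_iff)
  show ?thesis
  proof (intro iffI ballI)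
    fix w assume minimal: "\<forall>w \<in> T. Gnorm M (- u) \<le> Gnorm M (w - u)" and w: "w \<in> T"
    define q where "q = w \<bullet> (M *v w)"
    have q: "q \<ge> 0" unfolding q_def by (rule sym_posdef_quadratic_nonneg[OF M])
    have scaled: "2 * (w \<bullet> (M *v u)) \<le> t * q" if "t > 0" for t
    proof -
      have "2 * (t * (w \<bullet> (M *v u))) \<le> t * (t * q)"
        using minimal mem_cone[OF T w, of t] Gnorm_le_iff[of "t *\<^sub>R w"] that
        by (simp add: q_def matrix_vector_mult_scaleR)
      then show ?thesis using that by (simp add: mult.left_commute)
    qed
    show "w \<bullet> (M *v u) \<le> 0"
    proof (rule ccontr)
      assume pos: "\<not> w \<bullet> (M *v u) \<le> 0"
      define t where "t = (w \<bullet> (M *v u)) / (q + 1)"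
      have "t > 0" using pos q unfolding t_def by simp
      moreover have "t * q < w \<bullet> (M *v u)"
        using pos q unfolding t_def by (simp add: field_simps)
      ultimately show False using scaled pos by fastforce
    qed
  next
    fix w assume "\<forall>w \<in> T. w \<bullet> (M *v u) \<le> 0" and "w \<in> T"
    then show "Gnorm M (- u) \<le> Gnorm M (w - u)"
      using Gnorm_le_iff sym_posdef_quadratic_nonneg[OF M, of w] by fastforce
  qed
qed

lemma zero_in_tangent_cone:
  assumes "x \<in> Z"
  shows "0 \<in> tangent_cone Z x"
  unfolding tangent_cone_def
  using assms LIMSEQ_inverse_real_of_nat
  by (auto intro!: exI[of _ "\<lambda>k. x"] exI[of _ "\<lambda>k. inverse (real (Suc k))"])

lemma tangent_cone_scaleR:
  assumes "v \<in> tangent_cone Z x" "c > 0"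
  shows "c *\<^sub>R v \<in> tangent_cone Z x"
proof -
  obtain xs t where h: "x \<in> Z" "\<forall>k. xs k \<in> Z \<and> t k > 0" "xs \<longlonglongrightarrow> x" "t \<longlonglongrightarrow> 0"
    "(\<lambda>k. (1 / t k) *\<^sub>R (xs k - x)) \<longlonglongrightarrow> v"
    using assms(1) unfolding tangent_cone_def by blast
  have "(\<lambda>k. t k / c) \<longlonglongrightarrow> 0 / c"
    using h(4) assms(2) by (intro tendsto_intros) auto
  moreover have "(\<lambda>k. c *\<^sub>R ((1 / t k) *\<^sub>R (xs k - x))) \<longlonglongrightarrow> c *\<^sub>R v"
    using h(5) by (intro tendsto_intros)
  ultimately show ?thesis
    unfolding tangent_cone_def using h assms(2)
    by (auto intro!: exI[of _ xs] exI[of _ "\<lambda>k. t k / c"])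
qed

lemma cone_tangent_cone: "cone (tangent_cone Z x)"
  unfolding cone_def
proof (intro ballI allI impI)
  fix v and c :: real assume "v \<in> tangent_cone Z x" "c \<ge> 0"
  moreover have "x \<in> Z" using \<open>v \<in> tangent_cone Z x\<close> unfolding tangent_cone_def by blast
  ultimately show "c *\<^sub>R v \<in> tangent_cone Z x"
    using tangent_cone_scaleR[of v Z x c] zero_in_tangent_cone[of x Z] by (cases "c = 0") auto
qed

lemma normal_cone_scaleR:
  assumes "\<eta> \<in> normal_cone Z x" "c \<ge> 0"
  shows "c *\<^sub>R \<eta> \<in> normal_cone Z x"
  using assms unfolding normal_cone_def by (auto simp: mult_nonneg_nonpos)

lemma proj_normal_cone:
  assumes "p \<in> proj Z z"
  shows "z - p \<in> normal_cone Z p"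
  unfolding normal_cone_def
proof safe
  fix v assume "v \<in> tangent_cone Z p"
  then obtain xs t where h: "\<forall>k. xs k \<in> Z \<and> t k > 0" "xs \<longlonglongrightarrow> p"
    "(\<lambda>k. (1 / t k) *\<^sub>R (xs k - p)) \<longlonglongrightarrow> v"
    unfolding tangent_cone_def by blast
  have ineq: "2 * ((z - p) \<bullet> ((1 / t k) *\<^sub>R (xs k - p)))
      \<le> norm (xs k - p) * norm ((1 / t k) *\<^sub>R (xs k - p))" for k
  proof -
    have tk: "t k > 0" using h(1) by simp
    have "dist z p \<le> dist z (xs k)" using assms h(1) unfolding proj_def by auto
    then have "norm (z - p) ^ 2 \<le> norm ((z - p) - (xs k - p)) ^ 2"
      by (simp add: dist_norm power_mono)
    then have "2 * ((z - p) \<bullet> (xs k - p)) \<le> norm (xs k - p) ^ 2"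
      by (simp add: power2_norm_eq_inner inner_diff_left inner_diff_right inner_commute)
    then have "(1 / t k) * (2 * ((z - p) \<bullet> (xs k - p))) \<le> (1 / t k) * norm (xs k - p) ^ 2"
      using tk by (intro mult_left_mono) auto
    then show ?thesis
      using tk by (simp add: power2_eq_square)
  qed
  have "(\<lambda>k. 2 * ((z - p) \<bullet> ((1 / t k) *\<^sub>R (xs k - p)))) \<longlonglongrightarrow> 2 * ((z - p) \<bullet> v)"
    using h(3) by (intro tendsto_intros)
  moreover have "(\<lambda>k. norm (xs k - p) * norm ((1 / t k) *\<^sub>R (xs k - p))) \<longlonglongrightarrow> norm (p - p) * norm v"
    using h(2,3) by (intro tendsto_intros)
  ultimately have "2 * ((z - p) \<bullet> v) \<le> norm (p - p) * norm v"
    by (rule LIMSEQ_le) (use ineq in auto)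
  then show "(z - p) \<bullet> v \<le> 0" by simp
qed

lemma prox_regular_proj_unique:
  assumes prox: "prox_regular \<alpha> Z" and "\<alpha> > 0"
    and p1: "p1 \<in> proj Z z" and p2: "p2 \<in> proj Z z" and close: "dist z p1 < 1 / (2 * \<alpha>)"
  shows "p1 = p2"
proof -
  have Z: "p1 \<in> Z" "p2 \<in> Z" using p1 p2 unfolding proj_def by auto
  have "dist z p2 = dist z p1" using p1 p2 Z unfolding proj_def by (auto intro: antisym)
  then have r: "\<alpha> * (norm (z - p1) + norm (z - p2)) < 1"
    using close \<open>\<alpha> > 0\<close> by (simp add: dist_norm field_simps)
  define D where "D = (norm (p2 - p1))\<^sup>2"
  have "(z - p1) \<bullet> (p2 - p1) \<le> \<alpha> * norm (z - p1) * D"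
    using prox Z proj_normal_cone[OF p1] unfolding prox_regular_def D_def by blast
  moreover have "(z - p2) \<bullet> (p1 - p2) \<le> \<alpha> * norm (z - p2) * D"
    using prox Z proj_normal_cone[OF p2] unfolding prox_regular_def D_def
    by (metis norm_minus_commute)
  moreover have "(z - p1) \<bullet> (p2 - p1) + (z - p2) \<bullet> (p1 - p2) = D"
    unfolding D_def
    by (simp add: power2_norm_eq_inner inner_diff_left inner_diff_right inner_commute)
  moreover have "\<alpha> * (norm (z - p1) + norm (z - p2)) * D
      = \<alpha> * norm (z - p1) * D + \<alpha> * norm (z - p2) * D"
    by (simp add: distrib_left distrib_right)
  ultimately have "(1 - \<alpha> * (norm (z - p1) + norm (z - p2))) * D \<le> 0"
    by (simp add: left_diff_distrib)
  then have "D \<le> 0" using r by (simp add: mult_le_0_iff)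
  then show ?thesis unfolding D_def by simp
qed

lemma prox_regular_in_proj:
  assumes prox: "prox_regular \<alpha> Z" and "\<alpha> > 0" and x: "x \<in> Z"
    and \<eta>: "\<eta> \<in> normal_cone Z x" and short: "norm \<eta> \<le> 1 / (2 * \<alpha>)"
  shows "x \<in> proj Z (x + \<eta>)"
  unfolding proj_def
proof (safe intro!: x)
  fix y assume "y \<in> Z"
  then have "\<eta> \<bullet> (y - x) \<le> \<alpha> * norm \<eta> * (norm (y - x))\<^sup>2"
    using prox x \<eta> unfolding prox_regular_def by blast
  also have "\<dots> \<le> 1 / 2 * (norm (y - x))\<^sup>2"
    using short \<open>\<alpha> > 0\<close> by (intro mult_right_mono) (auto simp: field_simps)
  finally have "(norm \<eta>)\<^sup>2 \<le> (norm (\<eta> - (y - x)))\<^sup>2"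
    by (simp add: power2_norm_eq_inner inner_diff_left inner_diff_right inner_commute)
  then have "norm \<eta> \<le> norm (\<eta> - (y - x))"
    by (rule power2_le_imp_le) simp
  moreover have "\<eta> - (y - x) = x + \<eta> - y" by simp
  ultimately show "dist (x + \<eta>) x \<le> dist (x + \<eta>) y" by (simp add: dist_norm)
qed

lemma zero_in_proj_field_iff:
  assumes "x \<in> Z" and "sym_posdef (G x)"
  shows "0 \<in> proj_field Z G f x \<longleftrightarrow> G x *v f x \<in> normal_cone Z x"
  using cone_Gnorm_minimal_at_0_iff[OF assms(2) cone_tangent_cone, where u = "f x"] assms(1)
  unfolding proj_field_def normal_cone_def
  by (simp add: zero_in_tangent_cone inner_commute)

lemma zero_in_antiwindup_iff:
  assumes "K > 0" and "\<forall>x \<in> Z. sym_posdef (G x)"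
  shows "0 \<in> antiwindup Z G f K z \<longleftrightarrow> (\<exists>p \<in> proj Z z. z - p = K *\<^sub>R (G p *v f p))"
proof -
  have equation_iff: "0 = f p - (1 / K) *\<^sub>R (matrix_inv (G p) *v (z - p))
      \<longleftrightarrow> z - p = K *\<^sub>R (G p *v f p)"
    if "p \<in> proj Z z" for p
  proof -
    have "invertible (G p)"
      using that assms(2) sym_posdef_invertible unfolding proj_def by blast
    have "0 = f p - (1 / K) *\<^sub>R (matrix_inv (G p) *v (z - p))
        \<longleftrightarrow> K *\<^sub>R f p = matrix_inv (G p) *v (z - p)"
      using \<open>K > 0\<close> by (auto simp: eq_vector_fraction_iff)
    also have "\<dots> \<longleftrightarrow> z - p = G p *v (K *\<^sub>R f p)"
      by (subst eq_commute) (rule matrix_inv_mult_vector_eq_iff[OF \<open>invertible (G p)\<close>])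
    finally show ?thesis
      by (simp add: matrix_vector_mult_scaleR)
  qed
  have "0 \<in> antiwindup Z G f K z
      \<longleftrightarrow> (\<exists>p. 0 = f p - (1 / K) *\<^sub>R (matrix_inv (G p) *v (z - p)) \<and> p \<in> proj Z z)"
    unfolding antiwindup_def by (simp only: mem_Collect_eq)
  then show ?thesis
    using equation_iff by blast
qed

lemma antiwindup_equilibria_near_proj_field_equilibrium:
  assumes "\<alpha> > 0" and prox: "prox_regular \<alpha> Z" and G: "\<forall>x \<in> Z. sym_posdef (G x)"
    and x: "x \<in> Z" and equilibrium: "0 \<in> proj_field Z G f x"
  shows "\<exists>Ks > 0. \<forall>K. 0 < K \<and> K < Ks \<longrightarrow>
           (\<exists>\<eta> \<in> normal_cone Z x \<inter> ball 0 (1 / (2 * \<alpha>)). 0 \<in> antiwindup Z G f K (x + \<eta>))"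
proof (intro exI conjI allI impI)
  define g where "g = G x *v f x"
  have g: "g \<in> normal_cone Z x"
    using zero_in_proj_field_iff x G equilibrium unfolding g_def by blast
  have g_pos: "norm g + 1 > 0"
    using norm_ge_zero[of g] by linarith
  show "1 / (2 * \<alpha> * (norm g + 1)) > 0"
    using \<open>\<alpha> > 0\<close> g_pos by simp
  fix K assume K: "0 < K \<and> K < 1 / (2 * \<alpha> * (norm g + 1))"
  have "norm (K *\<^sub>R g) \<le> K * (norm g + 1)"
    using K by simp
  also have "\<dots> < 1 / (2 * \<alpha> * (norm g + 1)) * (norm g + 1)"
    using K g_pos by (intro mult_strict_right_mono) auto
  also have "\<dots> = 1 / (2 * \<alpha>)"
    using g_pos by simp
  finally have short: "norm (K *\<^sub>R g) < 1 / (2 * \<alpha>)" .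
  have normal: "K *\<^sub>R g \<in> normal_cone Z x"
    using normal_cone_scaleR[OF g] K by simp
  have "x \<in> proj Z (x + K *\<^sub>R g)"
    using prox_regular_in_proj[OF prox \<open>\<alpha> > 0\<close> x normal] short by simp
  moreover have "(x + K *\<^sub>R g) - x = K *\<^sub>R (G x *v f x)"
    by (simp add: g_def)
  ultimately have "0 \<in> antiwindup Z G f K (x + K *\<^sub>R g)"
    using zero_in_antiwindup_iff[of K Z G f] K G by blast
  then show "\<exists>\<eta> \<in> normal_cone Z x \<inter> ball 0 (1 / (2 * \<alpha>)). 0 \<in> antiwindup Z G f K (x + \<eta>)"
    using normal short by auto
qed

lemma proj_field_equilibrium_of_antiwindup_equilibrium:
  assumes "\<alpha> > 0" and prox: "prox_regular \<alpha> Z" and G: "\<forall>x \<in> Z. sym_posdef (G x)"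
    and "K > 0" and "y \<in> Z" and close: "dist z y < 1 / (2 * \<alpha>)"
    and equilibrium: "0 \<in> antiwindup Z G f K z" and p: "p \<in> proj Z z"
  shows "0 \<in> proj_field Z G f p"
proof -
  obtain p' where p': "p' \<in> proj Z z" and z: "z - p' = K *\<^sub>R (G p' *v f p')"
    using equilibrium zero_in_antiwindup_iff[OF \<open>K > 0\<close> G] by blast
  have "dist z p < 1 / (2 * \<alpha>)"
    using p \<open>y \<in> Z\<close> close unfolding proj_def by fastforce
  then have "p' = p"
    using prox_regular_proj_unique[OF prox \<open>\<alpha> > 0\<close> p p'] by simp
  then have "K *\<^sub>R (G p *v f p) \<in> normal_cone Z p"
    using proj_normal_cone[OF p] z by simp
  then have "G p *v f p \<in> normal_cone Z p"
    using normal_cone_scaleR[of _ Z p "1 / K"] \<open>K > 0\<close> by fastforce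
  moreover have "p \<in> Z" using p unfolding proj_def by blast
  ultimately show ?thesis
    using zero_in_proj_field_iff G by blast
qed

theorem proposition6p1:
  fixes Z :: "(real^'n) set" and \<alpha> :: real
    and G :: "real^'n \<Rightarrow> real^'n^'n" and f :: "real^'n \<Rightarrow> real^'n"
  assumes "closed Z" and "clarke_regular Z" and "\<alpha> > 0" and "prox_regular \<alpha> Z"
    and "\<forall>x \<in> Z. sym_posdef (G x)" and "continuous_on Z G"
    and "continuous_on Z f"
  shows "(\<forall>zbar \<in> Z. weak_equilibrium (proj_field Z G f) zbar \<longrightarrow>
            (\<exists>Ks > 0. \<forall>K. 0 < K \<and> K < Ks \<longrightarrow>
               (\<exists>zK. zK \<in> (\<lambda>\<eta>. zbar + \<eta>) ` (normal_cone Z zbar \<inter> ball 0 (1 / (2 * \<alpha>))) \<and>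
                     weak_equilibrium (antiwindup Z G f K) zK)))
       \<and> (\<forall>K zK. K > 0 \<longrightarrow> (\<exists>z \<in> Z. \<exists>b \<in> ball 0 (1 / (2 * \<alpha>)). zK = z + b) \<longrightarrow>
            weak_equilibrium (antiwindup Z G f K) zK \<longrightarrow>
            (\<forall>p \<in> proj Z zK. weak_equilibrium (proj_field Z G f) p))"
proof (intro conjI ballI impI allI)
  fix zbar assume "zbar \<in> Z" and "weak_equilibrium (proj_field Z G f) zbar"
  then have "0 \<in> proj_field Z G f zbar"
    by (simp add: weak_equilibrium_iff)
  then obtain Ks where "Ks > 0" and "\<forall>K. 0 < K \<and> K < Ks \<longrightarrow>
      (\<exists>\<eta> \<in> normal_cone Z zbar \<inter> ball 0 (1 / (2 * \<alpha>)). 0 \<in> antiwindup Z G f K (zbar + \<eta>))"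
    using antiwindup_equilibria_near_proj_field_equilibrium[OF assms(3-5) \<open>zbar \<in> Z\<close>] by blast
  then show "\<exists>Ks > 0. \<forall>K. 0 < K \<and> K < Ks \<longrightarrow>
               (\<exists>zK. zK \<in> (\<lambda>\<eta>. zbar + \<eta>) ` (normal_cone Z zbar \<inter> ball 0 (1 / (2 * \<alpha>))) \<and>
                     weak_equilibrium (antiwindup Z G f K) zK)"
    unfolding weak_equilibrium_iff by blast
next
  fix K zK p
  assume "K > 0" and "\<exists>z \<in> Z. \<exists>b \<in> ball 0 (1 / (2 * \<alpha>)). zK = z + b"
    and "weak_equilibrium (antiwindup Z G f K) zK" and "p \<in> proj Z zK"
  moreover from this obtain z where "z \<in> Z" and "dist zK z < 1 / (2 * \<alpha>)"
    by (auto simp: dist_norm)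
  ultimately show "weak_equilibrium (proj_field Z G f) p"
    using proj_field_equilibrium_of_antiwindup_equilibrium[OF assms(3-5)]
    by (simp add: weak_equilibrium_iff)
qed

end
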